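(* Let $p$ be a prime and let $C_p=\{I\subset\mathbf{R}\mid I \text{ a subgroup with } I\cong\mathbf{Z}[1/p] \text{ as abelian groups}\}$. For $I_1,I_2\in C_p$ define $I_1\cdot I_2$ to be the subgroup of $\mathbf{R}$ generated by $\{xy\mid x\in I_1,\ y\in I_2\}$. Then $C_p$ is an abelian group under this operation. *)

theory Defs
  imports Complex_Main "HOL-Computational_Algebra.Primes" "HOL-Algebra.Group"
begin

definition real_subgroup :: "real set \<Rightarrow> bool" where
  "real_subgroup I \<longleftrightarrow> 0 \<in> I \<and> (\<forall>x\<in>I. \<forall>y\<in>I. x + y \<in> I) \<and> (\<forall>x\<in>I. - x \<in> I)"

text \<open>The group Z[1/p], realised as the subring of R of fractions k / p^n.\<close>
definition Zinv :: "nat \<Rightarrow> real set" where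
  "Zinv p = {x. \<exists>k::int. \<exists>n::nat. x = of_int k / real p ^ n}"

definition add_iso :: "real set \<Rightarrow> real set \<Rightarrow> bool" where
  "add_iso I J \<longleftrightarrow> (\<exists>f. bij_betw f I J \<and> (\<forall>x\<in>I. \<forall>y\<in>I. f (x + y) = f x + f y))"

definition Cp :: "nat \<Rightarrow> real set set" where
  "Cp p = {I. real_subgroup I \<and> add_iso I (Zinv p)}"

definition gen_subgroup :: "real set \<Rightarrow> real set" where
  "gen_subgroup S = \<Inter>{H. real_subgroup H \<and> S \<subseteq> H}"

definition Cp_mult :: "real set \<Rightarrow> real set \<Rightarrow> real set" where
  "Cp_mult I1 I2 = gen_subgroup {x * y | x y. x \<in> I1 \<and> y \<in> I2}"

end

theory Submission
  imports Defs
begin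

(* An additive map g from Z[1/p] to R is multiplication by g 1: it commutes with integer
   multiples, and p^n * g (1 / p^n) = g 1.  Hence every I in C_p is a line a * Z[1/p] with
   a <> 0, and since Z[1/p] is a ring containing 1 the products of a * Z[1/p] and b * Z[1/p]
   already form the group a * b * Z[1/p].  So a |-> a * Z[1/p] carries the multiplicative
   group of nonzero reals onto C_p, which is therefore an abelian group with unit Z[1/p]. *)

lemma Zinv_of_int_div_power: "of_int k / real p ^ n \<in> Zinv p"
  unfolding Zinv_def by blast

lemma Zinv_1: "1 \<in> Zinv p"
  using Zinv_of_int_div_power[of 1 p 0] by simp

lemma Zinv_mult:
  assumes "x \<in> Zinv p" "y \<in> Zinv p"
  shows "x * y \<in> Zinv p"
proof -
  obtain k n l m where "x = of_int k / real p ^ n" "y = of_int l / real p ^ m"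
    using assms unfolding Zinv_def by blast
  then have "x * y = of_int (k * l) / real p ^ (n + m)"
    by (simp add: power_add)
  then show ?thesis
    by (metis Zinv_of_int_div_power)
qed

lemma real_subgroup_Zinv:
  assumes "p > 0"
  shows "real_subgroup (Zinv p)"
  unfolding real_subgroup_def
proof (intro conjI ballI)
  show "0 \<in> Zinv p"
    using Zinv_of_int_div_power[of 0 p 0] by simp
next
  fix x y assume "x \<in> Zinv p" "y \<in> Zinv p"
  then obtain k n l m where x: "x = of_int k / real p ^ n" and y: "y = of_int l / real p ^ m"
    unfolding Zinv_def by blast
  have "x + y = of_int (k * int p ^ m + l * int p ^ n) / real p ^ (n + m)"
    using assms by (simp add: x y field_simps power_add)
  then show "x + y \<in> Zinv p"
    by (metis Zinv_of_int_div_power)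
next
  fix x assume "x \<in> Zinv p"
  then obtain k n where "x = of_int k / real p ^ n"
    unfolding Zinv_def by blast
  then have "- x = of_int (- k) / real p ^ n"
    by simp
  then show "- x \<in> Zinv p"
    by (metis Zinv_of_int_div_power)
qed

lemma real_subgroup_int_mult:
  assumes "real_subgroup S" "x \<in> S"
  shows "of_int k * x \<in> S"
proof (induction k rule: int_induct[of _ 0])
  case base
  then show ?case
    using assms(1) unfolding real_subgroup_def by simp
next
  case (step1 i)
  then show ?case
    using assms unfolding real_subgroup_def by (simp add: distrib_right)
next
  case (step2 i)
  then have "of_int i * x + - x \<in> S"
    using assms unfolding real_subgroup_def by blast
  then show ?case
    by (simp add: left_diff_distrib)
qed

lemma additive_on_int_mult:
  fixes g :: "real \<Rightarrow> 'a::ring_1"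
  assumes S: "real_subgroup S" "x \<in> S"
    and additive: "\<And>u v. u \<in> S \<Longrightarrow> v \<in> S \<Longrightarrow> g (u + v) = g u + g v"
  shows "g (of_int k * x) = of_int k * g x"
proof (induction k rule: int_induct[of _ 0])
  have "0 \<in> S"
    using S(1) unfolding real_subgroup_def by blast
  then show "g (of_int 0 * x) = of_int 0 * g x"
    using additive[of 0 0] by simp
next
  case (step1 i)
  have "g (of_int i * x + x) = g (of_int i * x) + g x"
    using additive real_subgroup_int_mult[OF S] S(2) by blast
  with step1 show ?case
    by (simp add: distrib_right)
next
  case (step2 i)
  have "- x \<in> S" "0 \<in> S"
    using S unfolding real_subgroup_def by auto
  then have "g x + g (- x) = 0"
    using additive[of x "- x"] additive[of 0 0] S(2) by simp
  then have "g (- x) = - g x"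
    by (simp add: eq_neg_iff_add_eq_0 add.commute)
  moreover have "g (of_int i * x + - x) = g (of_int i * x) + g (- x)"
    using additive real_subgroup_int_mult[OF S] \<open>- x \<in> S\<close> by blast
  ultimately show ?case
    using step2 by (simp add: left_diff_distrib)
qed

lemma additive_on_Zinv_linear:
  fixes g :: "real \<Rightarrow> real"
  assumes "p > 0" "x \<in> Zinv p"
    and additive: "\<And>u v. u \<in> Zinv p \<Longrightarrow> v \<in> Zinv p \<Longrightarrow> g (u + v) = g u + g v"
  shows "g x = g 1 * x"
proof -
  note int_mult = additive_on_int_mult[OF real_subgroup_Zinv[OF \<open>p > 0\<close>] _ additive]
  obtain k n where x: "x = of_int k * (1 / real p ^ n)"
    using assms(2) unfolding Zinv_def by auto
  have inv_power: "1 / real p ^ n \<in> Zinv p"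
    using Zinv_of_int_div_power[of 1] by simp
  have "g 1 = g (of_int (int p ^ n) * (1 / real p ^ n))"
    using \<open>p > 0\<close> by simp
  also have "\<dots> = real p ^ n * g (1 / real p ^ n)"
    using int_mult[OF inv_power, of "int p ^ n"] by simp
  finally have "g (1 / real p ^ n) = g 1 / real p ^ n"
    using \<open>p > 0\<close> by (simp add: field_simps)
  then show ?thesis
    using int_mult[OF inv_power, of k] x by simp
qed

lemma add_iso_inverse:
  assumes "real_subgroup I" "add_iso I J"
  shows "\<exists>g. bij_betw g J I \<and> (\<forall>x\<in>J. \<forall>y\<in>J. g (x + y) = g x + g y)"
proof -
  obtain f where f: "bij_betw f I J" and additive: "\<forall>x\<in>I. \<forall>y\<in>I. f (x + y) = f x + f y"
    using assms(2) unfolding add_iso_def by blast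
  define g where "g = inv_into I f"
  have g: "bij_betw g J I"
    unfolding g_def using f by (rule bij_betw_inv_into)
  have "g (x + y) = g x + g y" if "x \<in> J" "y \<in> J" for x y
  proof -
    have "g x \<in> I" "g y \<in> I"
      using g that by (auto dest: bij_betwE)
    moreover have "f (g x) = x" "f (g y) = y"
      using f that unfolding g_def by (auto intro: bij_betw_inv_into_right)
    ultimately have "f (g x + g y) = x + y"
      using additive by simp
    moreover have "g x + g y \<in> I"
      using assms(1) \<open>g x \<in> I\<close> \<open>g y \<in> I\<close> unfolding real_subgroup_def by blast
    ultimately show ?thesis
      using f unfolding g_def by (metis bij_betw_inv_into_left)
  qed
  with g show ?thesis
    by blast
qed

definition Zinv_scaled :: "nat \<Rightarrow> real \<Rightarrow> real set" where
  "Zinv_scaled p a = (\<lambda>x. a * x) ` Zinv p"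

lemma Zinv_scaled_1 [simp]: "Zinv_scaled p 1 = Zinv p"
  unfolding Zinv_scaled_def by simp

lemma Cp_scaledE:
  assumes "p > 0" "I \<in> Cp p"
  obtains a where "a \<noteq> 0" "I = Zinv_scaled p a"
proof -
  obtain g where g: "bij_betw g (Zinv p) I"
    and additive: "\<forall>x\<in>Zinv p. \<forall>y\<in>Zinv p. g (x + y) = g x + g y"
    using assms(2) add_iso_inverse unfolding Cp_def by blast
  have linear: "g x = g 1 * x" if "x \<in> Zinv p" for x
    using additive_on_Zinv_linear[OF assms(1) that] additive by blast
  have "I = g ` Zinv p"
    using g by (simp add: bij_betw_def)
  also have "\<dots> = Zinv_scaled p (g 1)"
    unfolding Zinv_scaled_def using linear by (auto intro: image_cong)
  finally have "I = Zinv_scaled p (g 1)" .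
  moreover have "g 1 \<noteq> 0"
  proof
    assume "g 1 = 0"
    have "0 \<in> Zinv p"
      using real_subgroup_Zinv[OF assms(1)] unfolding real_subgroup_def by blast
    with \<open>g 1 = 0\<close> linear have "g 1 = g 0"
      by simp
    with g \<open>0 \<in> Zinv p\<close> Zinv_1 show False
      by (metis bij_betw_def inj_onD zero_neq_one)
  qed
  ultimately show ?thesis
    using that by blast
qed

lemma real_subgroup_Zinv_scaled:
  assumes "p > 0"
  shows "real_subgroup (Zinv_scaled p a)"
  unfolding real_subgroup_def
proof (intro conjI ballI)
  have "a * 0 \<in> Zinv_scaled p a" "a * 0 = 0"
    using real_subgroup_Zinv[OF assms] unfolding Zinv_scaled_def real_subgroup_def by auto
  then show "0 \<in> Zinv_scaled p a"
    by simp
next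
  fix x y assume "x \<in> Zinv_scaled p a" "y \<in> Zinv_scaled p a"
  then obtain u v where "u \<in> Zinv p" "v \<in> Zinv p" "x + y = a * (u + v)"
    unfolding Zinv_scaled_def by (auto simp: distrib_left)
  then show "x + y \<in> Zinv_scaled p a"
    using real_subgroup_Zinv[OF assms] unfolding Zinv_scaled_def real_subgroup_def by blast
next
  fix x assume "x \<in> Zinv_scaled p a"
  then obtain u where "u \<in> Zinv p" "- x = a * - u"
    unfolding Zinv_scaled_def by auto
  then show "- x \<in> Zinv_scaled p a"
    using real_subgroup_Zinv[OF assms] unfolding Zinv_scaled_def real_subgroup_def by blast
qed

lemma Zinv_scaled_in_Cp:
  assumes "p > 0" "a \<noteq> 0"
  shows "Zinv_scaled p a \<in> Cp p"
proof -
  have "bij_betw (\<lambda>x. x / a) (Zinv_scaled p a) (Zinv p)"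
    using assms(2) unfolding Zinv_scaled_def
    by (intro bij_betwI[where g = "\<lambda>x. a * x"]) auto
  then have "add_iso (Zinv_scaled p a) (Zinv p)"
    unfolding add_iso_def by (auto simp: add_divide_distrib)
  then show ?thesis
    using real_subgroup_Zinv_scaled[OF assms(1)] unfolding Cp_def by blast
qed

lemma gen_subgroup_real_subgroup: "real_subgroup H \<Longrightarrow> gen_subgroup H = H"
  unfolding gen_subgroup_def by blast

lemma Cp_mult_scaled:
  assumes "p > 0"
  shows "Cp_mult (Zinv_scaled p a) (Zinv_scaled p b) = Zinv_scaled p (a * b)"
proof -
  have "{x * y | x y. x \<in> Zinv_scaled p a \<and> y \<in> Zinv_scaled p b} = Zinv_scaled p (a * b)"
  proof (intro equalityI subsetI)
    fix z assume "z \<in> {x * y | x y. x \<in> Zinv_scaled p a \<and> y \<in> Zinv_scaled p b}"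
    then obtain u v where "u \<in> Zinv p" "v \<in> Zinv p" "z = a * b * (u * v)"
      unfolding Zinv_scaled_def by (auto simp: mult_ac)
    then show "z \<in> Zinv_scaled p (a * b)"
      unfolding Zinv_scaled_def using Zinv_mult by blast
  next
    fix z assume "z \<in> Zinv_scaled p (a * b)"
    then obtain u where "u \<in> Zinv p" "z = (a * u) * (b * 1)"
      unfolding Zinv_scaled_def by auto
    then show "z \<in> {x * y | x y. x \<in> Zinv_scaled p a \<and> y \<in> Zinv_scaled p b}"
      unfolding Zinv_scaled_def using Zinv_1 by blast
  qed
  then show ?thesis
    unfolding Cp_mult_def
    using gen_subgroup_real_subgroup[OF real_subgroup_Zinv_scaled[OF assms]] by simp
qed

theorem proposition6p1:
  fixes p :: nat
  assumes "prime p"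
  shows "\<exists>e. comm_group \<lparr>carrier = Cp p, mult = Cp_mult, one = e\<rparr>"
proof (intro exI[of _ "Zinv p"] comm_groupI, simp_all)
  have p: "p > 0"
    using assms prime_gt_0_nat by blast
  note scaledE = Cp_scaledE[OF p] and mult = Cp_mult_scaled[OF p]
    and scaled_in_Cp = Zinv_scaled_in_Cp[OF p]
  show "Zinv p \<in> Cp p"
    using scaled_in_Cp[of 1] by simp
  fix x y z assume "x \<in> Cp p" "y \<in> Cp p" "z \<in> Cp p"
  then obtain a b c where "a \<noteq> 0" "b \<noteq> 0"
    and xyz: "x = Zinv_scaled p a" "y = Zinv_scaled p b" "z = Zinv_scaled p c"
    by (metis scaledE)
  show "Cp_mult x y \<in> Cp p"
    using \<open>a \<noteq> 0\<close> \<open>b \<noteq> 0\<close> by (simp add: xyz mult scaled_in_Cp)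
  show "Cp_mult (Cp_mult x y) z = Cp_mult x (Cp_mult y z)"
    by (simp add: xyz mult mult.assoc)
  show "Cp_mult x y = Cp_mult y x"
    by (simp add: xyz mult mult.commute)
  show "Cp_mult (Zinv p) x = x"
    using mult[of 1 a] by (simp add: xyz)
  show "\<exists>w\<in>Cp p. Cp_mult w x = Zinv p"
    using \<open>a \<noteq> 0\<close> mult[of "inverse a" a] scaled_in_Cp[of "inverse a"] by (auto simp: xyz)
qed

end
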